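(* Let $G=(V,E)$ be a finite graph and $A \subset V$, $A \neq \emptyset$. Then: (i) $\mathbb P_V(A \in \mathrm{Inv}) = Z(A) Z(A^c) / Z(V)$. (ii) For $\mathcal F_A$-measurable $f$, $\mathbb E_V(f \mid A \in \mathrm{Inv}) = \mathbb E_A(f(\cdot \oplus \mathrm{id}))$. (iii) For $\mathcal F_A$-measurable $f$ and $\mathcal F_{A^c}$-measurable $g$, $$\mathbb E_V(f g \mid A \in \mathrm{Inv}) = \mathbb E_V(f \mid A \in \mathrm{Inv})\, \mathbb E_V(g \mid A \in \mathrm{Inv}) = \mathbb E_A(f(\cdot \oplus \mathrm{id}))\, \mathbb E_{A^c}(g(\cdot \oplus \mathrm{id})).$$ (iv) For $\mathcal F_A$-measurable $f$ and $\mathcal B \in \mathcal F_{A^c}$, $\mathbb E_V(f \mid A \in \mathrm{Inv}, \mathcal B) = \mathbb E_A(f)$.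
   Context: For $U\subset V$, $\mathcal S_U$ is the set of bijections $\pi:U\to U$ with $\pi(x)=x$ or $\{x,\pi(x)\}\in E$ for all $x\in U$ (edges within $U$). $\mathcal H_U(\pi)=\sum_{x\in U}\mathbb 1\{\pi(x)\ne x\}$, $Z(U)=\sum_{\pi\in\mathcal S_U}e^{-\alpha\mathcal H_U(\pi)}$ ($Z(\emptyset)=1$), $\mathbb P_U(\pi)=e^{-\alpha\mathcal H_U(\pi)}/Z(U)$, and $\mathbb E_U$ the corresponding expectation. For $B\subset V$, $\mathcal F_B$ is the $\sigma$-algebra on $\mathcal S_V$ generated by the events $\{\pi:\pi(x)=y,\ \pi^{-1}(x)=z\}$, $x\in B$, $y,z\in V$. $\mathrm{Inv}(\pi)=\{A\subset V:\pi(A)=A\}$ and $\{A\in\mathrm{Inv}\}$ is the event $\{\pi:\pi(A)=A\}$. For $\pi\in\mathcal S_A$, $\pi\oplus\mathrm{id}\in\mathcal S_V$ is the extension of $\pi$ by the identity outside $A$; for $f$ on $\mathcal S_V$, $\mathbb E_A(f)$ means $\mathbb E_A(f(\cdot\oplus\mathrm{id}))$. *)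

theory Defs
  imports Complex_Main "HOL-Combinatorics.Permutations"
begin

definition graph :: "'a set \<Rightarrow> ('a \<Rightarrow> 'a \<Rightarrow> bool) \<Rightarrow> bool" where
  "graph V E \<longleftrightarrow> finite V \<and> (\<forall>x y. E x y \<longrightarrow> E y x \<and> x \<noteq> y \<and> x \<in> V \<and> y \<in> V)"

text \<open>S_U: bijections of U moving each point along an edge (represented as
  permutations of U, i.e. extended by the identity outside U).\<close>
definition Sperm :: "('a \<Rightarrow> 'a \<Rightarrow> bool) \<Rightarrow> 'a set \<Rightarrow> ('a \<Rightarrow> 'a) set" where
  "Sperm E U = {\<pi>. \<pi> permutes U \<and> (\<forall>x\<in>U. \<pi> x = x \<or> E x (\<pi> x))}"

definition Ham :: "'a set \<Rightarrow> ('a \<Rightarrow> 'a) \<Rightarrow> nat" where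
  "Ham U \<pi> = card {x\<in>U. \<pi> x \<noteq> x}"

definition Zpart :: "('a \<Rightarrow> 'a \<Rightarrow> bool) \<Rightarrow> real \<Rightarrow> 'a set \<Rightarrow> real" where
  "Zpart E \<alpha> U = (\<Sum>\<pi>\<in>Sperm E U. exp (- \<alpha> * real (Ham U \<pi>)))"

definition Prob :: "('a \<Rightarrow> 'a \<Rightarrow> bool) \<Rightarrow> real \<Rightarrow> 'a set \<Rightarrow> ('a \<Rightarrow> 'a) \<Rightarrow> real" where
  "Prob E \<alpha> U \<pi> = exp (- \<alpha> * real (Ham U \<pi>)) / Zpart E \<alpha> U"

text \<open>Expectation under P_U of a function on permutations; since elements of S_U are
  already extended by the identity, this is E_U(f(. \<oplus> id)).\<close>
definition Expect :: "('a \<Rightarrow> 'a \<Rightarrow> bool) \<Rightarrow> real \<Rightarrow> 'a set \<Rightarrow> (('a \<Rightarrow> 'a) \<Rightarrow> real) \<Rightarrow> real" where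
  "Expect E \<alpha> U f = (\<Sum>\<pi>\<in>Sperm E U. f \<pi> * Prob E \<alpha> U \<pi>)"

definition ProbEv :: "('a \<Rightarrow> 'a \<Rightarrow> bool) \<Rightarrow> real \<Rightarrow> 'a set \<Rightarrow> ('a \<Rightarrow> 'a) set \<Rightarrow> real" where
  "ProbEv E \<alpha> U C = Expect E \<alpha> U (\<lambda>\<pi>. of_bool (\<pi> \<in> C))"

definition CondExpect :: "('a \<Rightarrow> 'a \<Rightarrow> bool) \<Rightarrow> real \<Rightarrow> 'a set \<Rightarrow> (('a \<Rightarrow> 'a) \<Rightarrow> real)
    \<Rightarrow> ('a \<Rightarrow> 'a) set \<Rightarrow> real" where
  "CondExpect E \<alpha> U f C = Expect E \<alpha> U (\<lambda>\<pi>. f \<pi> * of_bool (\<pi> \<in> C)) / ProbEv E \<alpha> U C"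

text \<open>f on S_V is F_B-measurable iff it is constant on the atoms of F_B, i.e. it only
  depends on (\<pi>(x), \<pi>^{-1}(x)) for x in B.\<close>
definition Fmeas :: "('a \<Rightarrow> 'a \<Rightarrow> bool) \<Rightarrow> 'a set \<Rightarrow> 'a set \<Rightarrow> (('a \<Rightarrow> 'a) \<Rightarrow> 'b) \<Rightarrow> bool" where
  "Fmeas E V B f \<longleftrightarrow> (\<forall>\<pi>\<in>Sperm E V. \<forall>\<sigma>\<in>Sperm E V.
      (\<forall>x\<in>B. \<pi> x = \<sigma> x \<and> inv \<pi> x = inv \<sigma> x) \<longrightarrow> f \<pi> = f \<sigma>)"

definition Fevent :: "('a \<Rightarrow> 'a \<Rightarrow> bool) \<Rightarrow> 'a set \<Rightarrow> 'a set \<Rightarrow> ('a \<Rightarrow> 'a) set \<Rightarrow> bool" where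
  "Fevent E V B C \<longleftrightarrow> C \<subseteq> Sperm E V \<and> Fmeas E V B (\<lambda>\<pi>. \<pi> \<in> C)"

definition InvEv :: "('a \<Rightarrow> 'a \<Rightarrow> bool) \<Rightarrow> 'a set \<Rightarrow> 'a set \<Rightarrow> ('a \<Rightarrow> 'a) set" where
  "InvEv E V A = {\<pi>\<in>Sperm E V. \<pi> ` A = A}"

end

theory Submission
  imports Defs
begin

text \<open>A permutation leaving A invariant is the same thing as a pair of independent permutations
  of A and of its complement, composed. Under this bijection the Hamiltonian is additive, so the
  Boltzmann weight factorizes, while an F_A-measurable function only sees the first factor and an
  F_{A^c}-measurable one only the second. Every sum over the event then splits as a product of
  a sum over S_A and a sum over S_{A^c}, and all four statements are quotients of such products.\<close>

abbreviation boltzmann :: "real \<Rightarrow> 'a set \<Rightarrow> ('a \<Rightarrow> 'a) \<Rightarrow> real" where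
  "boltzmann \<alpha> U \<pi> \<equiv> exp (- \<alpha> * real (Ham U \<pi>))"

lemma finite_Sperm: "finite U \<Longrightarrow> finite (Sperm E U)"
  by (rule finite_subset[OF _ finite_permutations[of U]]) (auto simp: Sperm_def)

lemma id_in_Sperm: "id \<in> Sperm E U"
  by (simp add: Sperm_def)

lemma Sperm_mono: "U \<subseteq> W \<Longrightarrow> Sperm E U \<subseteq> Sperm E W"
  by (auto simp: Sperm_def permutes_subset permutes_not_in)

lemma Zpart_pos: "finite U \<Longrightarrow> Zpart E \<alpha> U > 0"
  unfolding Zpart_def by (rule sum_pos) (use id_in_Sperm in \<open>auto simp: finite_Sperm\<close>)

lemma Expect_times_Zpart:
  "finite U \<Longrightarrow> Expect E \<alpha> U f * Zpart E \<alpha> U = (\<Sum>\<sigma>\<in>Sperm E U. f \<sigma> * boltzmann \<alpha> U \<sigma>)"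
  using Zpart_pos[of U E \<alpha>] by (simp add: Expect_def Prob_def sum_distrib_right)

lemma Expect_one: "finite U \<Longrightarrow> Expect E \<alpha> U (\<lambda>_. 1) = 1"
  using Expect_times_Zpart[of U E \<alpha> "\<lambda>_. 1"] Zpart_pos[of U E \<alpha>] by (simp add: Zpart_def)

lemma Expect_mult_indicator:
  assumes "finite V" and "C \<subseteq> Sperm E V"
  shows "Expect E \<alpha> V (\<lambda>\<pi>. F \<pi> * of_bool (\<pi> \<in> C))
    = (\<Sum>\<pi>\<in>C. F \<pi> * boltzmann \<alpha> V \<pi>) / Zpart E \<alpha> V"
proof -
  have "Expect E \<alpha> V (\<lambda>\<pi>. F \<pi> * of_bool (\<pi> \<in> C))
      = (\<Sum>\<pi>\<in>Sperm E V. F \<pi> * boltzmann \<alpha> V \<pi> / Zpart E \<alpha> V * of_bool (\<pi> \<in> C))"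
    by (simp add: Expect_def Prob_def mult_ac)
  also have "\<dots> = (\<Sum>\<pi>\<in>C. F \<pi> * boltzmann \<alpha> V \<pi> / Zpart E \<alpha> V)"
    using assms by (subst sum_mult_of_bool_eq) (simp_all add: finite_Sperm Int_absorb1)
  finally show ?thesis
    by (simp add: sum_divide_distrib)
qed

lemma comp_permutes_disjoint_apply:
  assumes \<sigma>: "\<sigma> permutes A" and \<tau>: "\<tau> permutes B" and AB: "A \<inter> B = {}"
  shows "\<sigma> (\<tau> x) = (if x \<in> A then \<sigma> x else \<tau> x)"
proof (cases "x \<in> B")
  case True
  then have "\<tau> x \<in> B" by (simp add: permutes_in_image[OF \<tau>])
  then show ?thesis using True AB permutes_not_in[OF \<sigma>] by auto
qed (use permutes_not_in[OF \<tau>] permutes_not_in[OF \<sigma>] in auto)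

lemma comp_permutes_disjoint_commute:
  assumes "\<sigma> permutes A" "\<tau> permutes B" "A \<inter> B = {}"
  shows "\<sigma> \<circ> \<tau> = \<tau> \<circ> \<sigma>"
proof
  fix x
  have "B \<inter> A = {}" using assms(3) by blast
  then show "(\<sigma> \<circ> \<tau>) x = (\<tau> \<circ> \<sigma>) x"
    using assms comp_permutes_disjoint_apply[OF assms(2,1)] comp_permutes_disjoint_apply[OF assms]
    by (auto simp: permutes_not_in)
qed

lemma comp_permutes_disjoint_inv_apply:
  assumes \<sigma>: "\<sigma> permutes A" and \<tau>: "\<tau> permutes B" and AB: "A \<inter> B = {}" and x: "x \<in> A"
  shows "inv (\<sigma> \<circ> \<tau>) x = inv \<sigma> x"
proof -
  have "\<sigma> \<circ> \<tau> permutes A \<union> B"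
    by (intro permutes_compose permutes_subset[OF \<sigma>] permutes_subset[OF \<tau>]) auto
  moreover have "inv \<sigma> x \<in> A"
    using x by (simp add: permutes_in_image[OF permutes_inv[OF \<sigma>]])
  then have "(\<sigma> \<circ> \<tau>) (inv \<sigma> x) = x"
    using comp_permutes_disjoint_apply[OF assms(1-3)] permutes_inverses(1)[OF \<sigma>] by simp
  ultimately show ?thesis
    by (simp add: permutes_inv_eq)
qed

lemma comp_disjoint_Sperm:
  assumes \<sigma>: "\<sigma> \<in> Sperm E A" and \<tau>: "\<tau> \<in> Sperm E B" and AB: "A \<inter> B = {}"
  shows "\<sigma> \<circ> \<tau> \<in> Sperm E (A \<union> B)"
proof -
  have \<sigma>p: "\<sigma> permutes A" and \<tau>p: "\<tau> permutes B"
    using \<sigma> \<tau> by (auto simp: Sperm_def)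
  have "\<sigma> \<circ> \<tau> permutes A \<union> B"
    by (intro permutes_compose permutes_subset[OF \<sigma>p] permutes_subset[OF \<tau>p]) auto
  moreover have "\<forall>x\<in>A \<union> B. (\<sigma> \<circ> \<tau>) x = x \<or> E x ((\<sigma> \<circ> \<tau>) x)"
    using \<sigma> \<tau> AB by (auto simp: Sperm_def comp_permutes_disjoint_apply[OF \<sigma>p \<tau>p AB])
  ultimately show ?thesis
    by (simp add: Sperm_def)
qed

lemma Ham_comp_disjoint:
  assumes "finite A" "finite B" "\<sigma> permutes A" "\<tau> permutes B" "A \<inter> B = {}"
  shows "Ham (A \<union> B) (\<sigma> \<circ> \<tau>) = Ham A \<sigma> + Ham B \<tau>"
proof -
  have "{x \<in> A \<union> B. (\<sigma> \<circ> \<tau>) x \<noteq> x} = {x \<in> A. \<sigma> x \<noteq> x} \<union> {x \<in> B. \<tau> x \<noteq> x}"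
    using assms(5) by (auto simp: comp_permutes_disjoint_apply[OF assms(3-5)])
  then show ?thesis
    unfolding Ham_def using assms by (subst card_Un_disjoint[symmetric]) auto
qed

lemma restrict_id_comp_disjoint:
  assumes \<sigma>: "\<sigma> permutes A" and \<tau>: "\<tau> permutes B" and AB: "A \<inter> B = {}"
  shows "restrict_id (\<sigma> \<circ> \<tau>) A = \<sigma>" "restrict_id (\<sigma> \<circ> \<tau>) B = \<tau>"
  using AB permutes_not_in[OF \<sigma>] permutes_not_in[OF \<tau>]
  by (auto simp: fun_eq_iff restrict_id_def comp_permutes_disjoint_apply[OF assms])

lemma restrict_id_Sperm:
  assumes \<pi>: "\<pi> \<in> Sperm E V" and inv: "\<pi> ` A = A"
  shows "restrict_id \<pi> A \<in> Sperm E A"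
proof -
  have "inj \<pi>" using \<pi> by (auto simp: Sperm_def intro: permutes_inj)
  then have "bij_betw \<pi> A A" using inv by (simp add: bij_betw_def inj_on_subset[OF _ subset_UNIV])
  then have "restrict_id \<pi> A permutes A" by (rule permutes_restrict_id)
  then show ?thesis
    using \<pi> by (auto simp: Sperm_def permutes_not_in)
qed

lemma permutes_image_Diff:
  assumes "\<pi> permutes V" and "\<pi> ` A = A"
  shows "\<pi> ` (V - A) = V - A"
  using assms by (simp add: image_set_diff permutes_inj permutes_image)

lemma restrict_id_comp_Diff:
  assumes \<pi>: "\<pi> permutes V" and inv: "\<pi> ` A = A"
  shows "restrict_id \<pi> A \<circ> restrict_id \<pi> (V - A) = \<pi>"
proof
  fix x
  have "\<pi> x \<in> V - A" if "x \<in> V - A"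
    using that permutes_image_Diff[OF assms] by blast
  then show "(restrict_id \<pi> A \<circ> restrict_id \<pi> (V - A)) x = \<pi> x"
    by (cases "x \<in> V") (auto simp: restrict_id_def permutes_not_in[OF \<pi>])
qed

lemma bij_betw_comp_InvEv:
  assumes AV: "A \<subseteq> V"
  shows "bij_betw (\<lambda>(\<sigma>, \<tau>). \<sigma> \<circ> \<tau>) (Sperm E A \<times> Sperm E (V - A)) (InvEv E V A)"
proof (rule bij_betw_byWitness[where f' = "\<lambda>\<pi>. (restrict_id \<pi> A, restrict_id \<pi> (V - A))"])
  have perm: "\<sigma> permutes A" "\<tau> permutes V - A" if "\<sigma> \<in> Sperm E A" "\<tau> \<in> Sperm E (V - A)" for \<sigma> \<tau>
    using that by (auto simp: Sperm_def)
  have disj: "A \<inter> (V - A) = {}" by blast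
  show "\<forall>p\<in>Sperm E A \<times> Sperm E (V - A).
      (restrict_id (case p of (\<sigma>, \<tau>) \<Rightarrow> \<sigma> \<circ> \<tau>) A, restrict_id (case p of (\<sigma>, \<tau>) \<Rightarrow> \<sigma> \<circ> \<tau>) (V - A)) = p"
    using restrict_id_comp_disjoint[OF perm disj] by fastforce
  show "(\<lambda>(\<sigma>, \<tau>). \<sigma> \<circ> \<tau>) ` (Sperm E A \<times> Sperm E (V - A)) \<subseteq> InvEv E V A"
  proof clarify
    fix \<sigma> \<tau> assume \<sigma>: "\<sigma> \<in> Sperm E A" and \<tau>: "\<tau> \<in> Sperm E (V - A)"
    have "(\<sigma> \<circ> \<tau>) ` A = \<sigma> ` A"
      by (intro image_cong) (simp_all add: comp_permutes_disjoint_apply[OF perm[OF \<sigma> \<tau>] disj])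
    also have "\<dots> = A" using perm(1)[OF \<sigma> \<tau>] by (rule permutes_image)
    finally show "\<sigma> \<circ> \<tau> \<in> InvEv E V A"
      using comp_disjoint_Sperm[OF \<sigma> \<tau> disj] by (simp add: InvEv_def Un_absorb1[OF AV])
  qed
  show "\<forall>\<pi>\<in>InvEv E V A. (case (restrict_id \<pi> A, restrict_id \<pi> (V - A)) of (\<sigma>, \<tau>) \<Rightarrow> \<sigma> \<circ> \<tau>) = \<pi>"
    by (auto simp: InvEv_def Sperm_def restrict_id_comp_Diff)
  show "(\<lambda>\<pi>. (restrict_id \<pi> A, restrict_id \<pi> (V - A))) ` InvEv E V A \<subseteq> Sperm E A \<times> Sperm E (V - A)"
  proof (rule image_subsetI)
    fix \<pi> assume "\<pi> \<in> InvEv E V A"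
    then have \<pi>: "\<pi> \<in> Sperm E V" and inv: "\<pi> ` A = A"
      by (auto simp: InvEv_def)
    have "\<pi> ` (V - A) = V - A"
      using \<pi> inv by (intro permutes_image_Diff) (simp_all add: Sperm_def)
    then show "(restrict_id \<pi> A, restrict_id \<pi> (V - A)) \<in> Sperm E A \<times> Sperm E (V - A)"
      using \<pi> inv by (simp add: restrict_id_Sperm)
  qed
qed

lemma Fmeas_const: "Fmeas E V B (\<lambda>_. c)"
  by (simp add: Fmeas_def)

lemma Fmeas_compose: "Fmeas E V B f \<Longrightarrow> Fmeas E V B (\<lambda>\<pi>. h (f \<pi>))"
  unfolding Fmeas_def by metis

lemma Fevent_imp_Fmeas_indicator: "Fevent E V B C \<Longrightarrow> Fmeas E V B (\<lambda>\<pi>. of_bool (\<pi> \<in> C))"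
  unfolding Fevent_def by (auto intro: Fmeas_compose)

lemma Fmeas_comp_disjoint_left:
  assumes f: "Fmeas E V A f" and \<sigma>: "\<sigma> \<in> Sperm E A" and \<tau>: "\<tau> \<in> Sperm E B"
    and AB: "A \<inter> B = {}" and ABV: "A \<union> B \<subseteq> V"
  shows "f (\<sigma> \<circ> \<tau>) = f \<sigma>"
proof -
  have \<sigma>p: "\<sigma> permutes A" and \<tau>p: "\<tau> permutes B"
    using \<sigma> \<tau> by (auto simp: Sperm_def)
  have "\<sigma> \<circ> \<tau> \<in> Sperm E V"
    using comp_disjoint_Sperm[OF \<sigma> \<tau> AB] Sperm_mono[OF ABV] by blast
  moreover have "\<sigma> \<in> Sperm E V"
    using \<sigma> Sperm_mono[of A V] ABV by blast
  moreover have "\<forall>x\<in>A. (\<sigma> \<circ> \<tau>) x = \<sigma> x \<and> inv (\<sigma> \<circ> \<tau>) x = inv \<sigma> x"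
    by (simp add: comp_permutes_disjoint_apply[OF \<sigma>p \<tau>p AB]
        comp_permutes_disjoint_inv_apply[OF \<sigma>p \<tau>p AB])
  ultimately show ?thesis
    using f unfolding Fmeas_def by blast
qed

lemma Fmeas_comp_disjoint_right:
  assumes g: "Fmeas E V B g" and \<sigma>: "\<sigma> \<in> Sperm E A" and \<tau>: "\<tau> \<in> Sperm E B"
    and AB: "A \<inter> B = {}" and ABV: "A \<union> B \<subseteq> V"
  shows "g (\<sigma> \<circ> \<tau>) = g \<tau>"
proof -
  have "\<sigma> \<circ> \<tau> = \<tau> \<circ> \<sigma>"
    using \<sigma> \<tau> AB by (intro comp_permutes_disjoint_commute) (auto simp: Sperm_def)
  moreover have "g (\<tau> \<circ> \<sigma>) = g \<tau>"
    using AB ABV by (intro Fmeas_comp_disjoint_left[OF g \<tau> \<sigma>]) auto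
  ultimately show ?thesis by simp
qed

lemma sum_InvEv_factor:
  assumes fin: "finite V" and AV: "A \<subseteq> V"
    and F: "\<And>\<sigma> \<tau>. \<sigma> \<in> Sperm E A \<Longrightarrow> \<tau> \<in> Sperm E (V - A) \<Longrightarrow> F (\<sigma> \<circ> \<tau>) = a \<sigma> * b \<tau>"
  shows "(\<Sum>\<pi>\<in>InvEv E V A. F \<pi> * boltzmann \<alpha> V \<pi>)
    = (\<Sum>\<sigma>\<in>Sperm E A. a \<sigma> * boltzmann \<alpha> A \<sigma>)
      * (\<Sum>\<tau>\<in>Sperm E (V - A). b \<tau> * boltzmann \<alpha> (V - A) \<tau>)"
proof -
  have "(\<Sum>\<pi>\<in>InvEv E V A. F \<pi> * boltzmann \<alpha> V \<pi>)
      = (\<Sum>(\<sigma>, \<tau>)\<in>Sperm E A \<times> Sperm E (V - A). F (\<sigma> \<circ> \<tau>) * boltzmann \<alpha> V (\<sigma> \<circ> \<tau>))"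
    using sum.reindex_bij_betw[OF bij_betw_comp_InvEv[OF AV], symmetric]
    by (simp add: case_prod_beta)
  also have "\<dots> = (\<Sum>(\<sigma>, \<tau>)\<in>Sperm E A \<times> Sperm E (V - A).
      (a \<sigma> * boltzmann \<alpha> A \<sigma>) * (b \<tau> * boltzmann \<alpha> (V - A) \<tau>))"
  proof (rule sum.cong[OF refl], clarify)
    fix \<sigma> \<tau> assume \<sigma>: "\<sigma> \<in> Sperm E A" and \<tau>: "\<tau> \<in> Sperm E (V - A)"
    have "Ham V (\<sigma> \<circ> \<tau>) = Ham A \<sigma> + Ham (V - A) \<tau>"
      using Ham_comp_disjoint[of A "V - A" \<sigma> \<tau>] \<sigma> \<tau> fin AV finite_subset
      by (auto simp: Sperm_def Un_absorb1)
    then show "F (\<sigma> \<circ> \<tau>) * boltzmann \<alpha> V (\<sigma> \<circ> \<tau>)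
        = a \<sigma> * boltzmann \<alpha> A \<sigma> * (b \<tau> * boltzmann \<alpha> (V - A) \<tau>)"
      by (simp add: F[OF \<sigma> \<tau>] distrib_left exp_add[symmetric])
  qed
  also have "\<dots> = (\<Sum>\<sigma>\<in>Sperm E A. a \<sigma> * boltzmann \<alpha> A \<sigma>)
      * (\<Sum>\<tau>\<in>Sperm E (V - A). b \<tau> * boltzmann \<alpha> (V - A) \<tau>)"
    by (simp add: sum_product sum.cartesian_product)
  finally show ?thesis .
qed

lemma Expect_InvEv_factor:
  assumes fin: "finite V" and AV: "A \<subseteq> V"
    and f: "Fmeas E V A f" and g: "Fmeas E V (V - A) g"
  shows "Expect E \<alpha> V (\<lambda>\<pi>. f \<pi> * g \<pi> * of_bool (\<pi> \<in> InvEv E V A))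
    = Zpart E \<alpha> A * Zpart E \<alpha> (V - A) / Zpart E \<alpha> V * (Expect E \<alpha> A f * Expect E \<alpha> (V - A) g)"
proof -
  have "(\<Sum>\<pi>\<in>InvEv E V A. f \<pi> * g \<pi> * boltzmann \<alpha> V \<pi>)
      = (\<Sum>\<sigma>\<in>Sperm E A. f \<sigma> * boltzmann \<alpha> A \<sigma>)
        * (\<Sum>\<tau>\<in>Sperm E (V - A). g \<tau> * boltzmann \<alpha> (V - A) \<tau>)"
    using AV by (intro sum_InvEv_factor[OF fin AV])
      (simp add: Fmeas_comp_disjoint_left[OF f] Fmeas_comp_disjoint_right[OF g])
  also have "\<dots> = Expect E \<alpha> A f * Zpart E \<alpha> A * (Expect E \<alpha> (V - A) g * Zpart E \<alpha> (V - A))"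
    using finite_subset[OF AV fin] fin by (simp add: Expect_times_Zpart)
  finally show ?thesis
    using Expect_mult_indicator[OF fin, where C = "InvEv E V A" and F = "\<lambda>\<pi>. f \<pi> * g \<pi>"]
    by (simp add: InvEv_def)
qed

lemma ProbEv_InvEv:
  assumes "finite V" and "A \<subseteq> V"
  shows "ProbEv E \<alpha> V (InvEv E V A) = Zpart E \<alpha> A * Zpart E \<alpha> (V - A) / Zpart E \<alpha> V"
  using Expect_InvEv_factor[OF assms Fmeas_const[where c = 1] Fmeas_const[where c = 1]]
    finite_subset[OF assms(2,1)] assms(1)
  by (simp add: ProbEv_def Expect_one)

lemma CondExpect_InvEv_mult:
  assumes fin: "finite V" and AV: "A \<subseteq> V"
    and f: "Fmeas E V A f" and g: "Fmeas E V (V - A) g"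
  shows "CondExpect E \<alpha> V (\<lambda>\<pi>. f \<pi> * g \<pi>) (InvEv E V A) = Expect E \<alpha> A f * Expect E \<alpha> (V - A) g"
proof -
  have "Zpart E \<alpha> A > 0" "Zpart E \<alpha> (V - A) > 0" "Zpart E \<alpha> V > 0"
    using finite_subset[OF AV fin] fin by (simp_all add: Zpart_pos)
  then show ?thesis
    by (simp add: CondExpect_def ProbEv_InvEv[OF fin AV] Expect_InvEv_factor[OF fin AV f g])
qed

lemma CondExpect_InvEv_left:
  assumes "finite V" and "A \<subseteq> V" and "Fmeas E V A f"
  shows "CondExpect E \<alpha> V f (InvEv E V A) = Expect E \<alpha> A f"
  using CondExpect_InvEv_mult[OF assms Fmeas_const[where c = 1], of \<alpha>] assms(1)
  by (simp add: Expect_one)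

lemma CondExpect_InvEv_right:
  assumes "finite V" and "A \<subseteq> V" and "Fmeas E V (V - A) g"
  shows "CondExpect E \<alpha> V g (InvEv E V A) = Expect E \<alpha> (V - A) g"
  using CondExpect_InvEv_mult[OF assms(1,2) Fmeas_const[where c = 1] assms(3), of \<alpha>]
    finite_subset[OF assms(2,1)]
  by (simp add: Expect_one)

lemma CondExpect_InvEv_Int:
  assumes fin: "finite V" and AV: "A \<subseteq> V" and f: "Fmeas E V A f"
    and B: "Fevent E V (V - A) B" and pos: "ProbEv E \<alpha> V (InvEv E V A \<inter> B) \<noteq> 0"
  shows "CondExpect E \<alpha> V f (InvEv E V A \<inter> B) = Expect E \<alpha> A f"
proof -
  define c where "c = Zpart E \<alpha> A * Zpart E \<alpha> (V - A) / Zpart E \<alpha> V"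
  define pB where "pB = Expect E \<alpha> (V - A) (\<lambda>\<tau>. of_bool (\<tau> \<in> B))"
  have indicator_Int: "of_bool (\<pi> \<in> InvEv E V A \<inter> B)
      = (of_bool (\<pi> \<in> B) * of_bool (\<pi> \<in> InvEv E V A) :: real)" for \<pi>
    by auto
  note factor = Expect_InvEv_factor[OF fin AV _ Fevent_imp_Fmeas_indicator[OF B]]
  have "ProbEv E \<alpha> V (InvEv E V A \<inter> B) = c * pB"
    unfolding ProbEv_def indicator_Int
    using factor[OF Fmeas_const[where c = 1], of \<alpha>] finite_subset[OF AV fin]
    by (simp add: c_def pB_def Expect_one)
  moreover have "Expect E \<alpha> V (\<lambda>\<pi>. f \<pi> * of_bool (\<pi> \<in> InvEv E V A \<inter> B))
      = c * (Expect E \<alpha> A f * pB)"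
    unfolding indicator_Int using factor[OF f, of \<alpha>] by (simp add: c_def pB_def mult.assoc)
  ultimately show ?thesis
    using pos by (simp add: CondExpect_def)
qed

theorem proposition4p1:
  fixes V A :: "'a set" and E :: "'a \<Rightarrow> 'a \<Rightarrow> bool" and \<alpha> :: real
  assumes "graph V E" and "A \<subseteq> V" and "A \<noteq> {}"
  shows "ProbEv E \<alpha> V (InvEv E V A) = Zpart E \<alpha> A * Zpart E \<alpha> (V - A) / Zpart E \<alpha> V
    \<and> (\<forall>f. Fmeas E V A f \<longrightarrow>
           CondExpect E \<alpha> V f (InvEv E V A) = Expect E \<alpha> A f)
    \<and> (\<forall>f g. Fmeas E V A f \<longrightarrow> Fmeas E V (V - A) g \<longrightarrow>
           CondExpect E \<alpha> V (\<lambda>\<pi>. f \<pi> * g \<pi>) (InvEv E V A)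
             = CondExpect E \<alpha> V f (InvEv E V A) * CondExpect E \<alpha> V g (InvEv E V A)
         \<and> CondExpect E \<alpha> V f (InvEv E V A) * CondExpect E \<alpha> V g (InvEv E V A)
             = Expect E \<alpha> A f * Expect E \<alpha> (V - A) g)
    \<and> (\<forall>f B. Fmeas E V A f \<longrightarrow> Fevent E V (V - A) B \<longrightarrow>
           ProbEv E \<alpha> V (InvEv E V A \<inter> B) > 0 \<longrightarrow>
           CondExpect E \<alpha> V f (InvEv E V A \<inter> B) = Expect E \<alpha> A f)"
proof -
  have fin: "finite V"
    using assms(1) by (simp add: graph_def)
  note AV = assms(2)
  show ?thesis
  proof (intro conjI allI impI)
    show "ProbEv E \<alpha> V (InvEv E V A) = Zpart E \<alpha> A * Zpart E \<alpha> (V - A) / Zpart E \<alpha> V"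
      by (rule ProbEv_InvEv[OF fin AV])
  next
    fix f :: "('a \<Rightarrow> 'a) \<Rightarrow> real"
    assume "Fmeas E V A f"
    then show "CondExpect E \<alpha> V f (InvEv E V A) = Expect E \<alpha> A f"
      by (rule CondExpect_InvEv_left[OF fin AV])
  next
    fix f g :: "('a \<Rightarrow> 'a) \<Rightarrow> real"
    assume "Fmeas E V A f" "Fmeas E V (V - A) g"
    then show "CondExpect E \<alpha> V (\<lambda>\<pi>. f \<pi> * g \<pi>) (InvEv E V A)
        = CondExpect E \<alpha> V f (InvEv E V A) * CondExpect E \<alpha> V g (InvEv E V A)"
      and "CondExpect E \<alpha> V f (InvEv E V A) * CondExpect E \<alpha> V g (InvEv E V A)
        = Expect E \<alpha> A f * Expect E \<alpha> (V - A) g"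
      by (simp_all add: CondExpect_InvEv_mult[OF fin AV] CondExpect_InvEv_left[OF fin AV]
          CondExpect_InvEv_right[OF fin AV])
  next
    fix f :: "('a \<Rightarrow> 'a) \<Rightarrow> real" and B
    assume "Fmeas E V A f" "Fevent E V (V - A) B" "ProbEv E \<alpha> V (InvEv E V A \<inter> B) > 0"
    then show "CondExpect E \<alpha> V f (InvEv E V A \<inter> B) = Expect E \<alpha> A f"
      by (intro CondExpect_InvEv_Int[OF fin AV]) auto
  qed
qed

end
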